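(* Let $Z_0,Z_1,\dots$ be i.i.d. real random variables with $\mathbb{E}[Z_0]=\mu$ and $\mathbb{E}[|Z_0|^p]<\infty$ for some $p>1$. Define $X_1=Z_0$ and $X_{n+1}=X_n+\alpha_n(Z_n-X_n)$ for $n\ge1$, where $(\alpha_n)$ is a non-increasing sequence of positive numbers with $\sum_n\alpha_n=\infty$ and $\sum_n\alpha_n^p<\infty$. Then $X_n\to\mu$ almost surely. In particular this holds for $\alpha_n=\alpha(n+K)^{-\xi}$ with $\alpha,K>0$ and $\xi\in(1/p,1]$. *)

theory Defs
  imports "HOL-Probability.Probability"
begin

text \<open>Stochastic approximation iterate, indexed from 1 as in the paper:
  X_1 = Z_0 and X_{n+1} = X_n + a_n (Z_n - X_n) for n \<ge> 1.
  The value at index 0 is an irrelevant dummy (set to Z_0).\<close>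
primrec sa_iter :: "(nat \<Rightarrow> real) \<Rightarrow> (nat \<Rightarrow> 'a \<Rightarrow> real) \<Rightarrow> nat \<Rightarrow> 'a \<Rightarrow> real" where
  "sa_iter a Z 0 x = Z 0 x"
| "sa_iter a Z (Suc n) x =
     (if n = 0 then Z 0 x else sa_iter a Z n x + a n * (Z n x - sa_iter a Z n x))"

end

(*
  Write e_n = X_n - mu, so that e_(n+1) = (1 - a_n) e_n + a_n (Z_n - mu). Since sum a_n = infinity
  and a_n -> 0, the indices can be cut into consecutive blocks of step-size mass between eta and
  2 eta. Over one block the recursion contracts |e| by the factor 1 - eta/2, up to the weighted
  block sum of the noise and a second-order term; hence |e_n| is eventually O(eta) as soon as,
  almost surely, the weighted block sums of Z_k - mu are eventually O(eta^2) and those of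
  |Z_k - mu| are O(eta).

  These block estimates follow by truncating a_k Z_k at a level delta proportional to eta^2.
  Borel-Cantelli and the p-th moment show that the truncation is eventually inactive; the
  truncation bias over a block is bounded by the block sum of a_k^p; and a Chernoff bound for the
  bounded, centered truncations gives tail probabilities again proportional to that block sum,
  which is summable over the blocks because sum a_k^p < infinity.
*)

theory Submission
  imports Defs
begin

lemma exp_le_one_plus_quadratic:
  fixes x c :: real
  assumes "\<bar>x\<bar> \<le> c"
  shows "exp x \<le> 1 + x + x\<^sup>2 * exp c / 2"
proof -
  obtain t where t: "\<bar>t\<bar> \<le> \<bar>x\<bar>" "exp x = (\<Sum>m<2. x ^ m / fact m) + exp t / fact 2 * x ^ 2"
    using Maclaurin_exp_le[of x 2] by blast
  have "exp x = 1 + x + exp t * x\<^sup>2 / 2" using t(2) by (simp add: numeral_2_eq_2)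
  also have "exp t * x\<^sup>2 / 2 \<le> exp c * x\<^sup>2 / 2"
    using t(1) assms by (intro divide_right_mono mult_right_mono) auto
  finally show ?thesis by (simp add: algebra_simps)
qed

lemma ln_squared_le_sqrt:
  fixes y :: real
  assumes "1 \<le> y"
  shows "(ln y)\<^sup>2 \<le> 16 * sqrt y"
proof -
  have y: "0 < y" using assms by simp
  have "ln y = 4 * ln (y powr (1/4))" using y by (simp add: ln_powr)
  also have "ln (y powr (1/4)) \<le> y powr (1/4) - 1" using y by (intro ln_le_minus_one) auto
  finally have "ln y \<le> 4 * y powr (1/4)" by simp
  then have "(ln y)\<^sup>2 \<le> (4 * y powr (1/4))\<^sup>2" using assms by (intro power_mono) auto
  also have "\<dots> = 16 * y powr (1/2)" by (simp add: power2_eq_square powr_add[symmetric])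
  finally show ?thesis using y by (simp add: powr_half_sqrt)
qed

lemma square_le_powr_mult_powr:
  fixes y \<delta> q :: real
  assumes "0 \<le> y" "y \<le> \<delta>" "q \<le> 2"
  shows "y\<^sup>2 \<le> \<delta> powr (2 - q) * y powr q"
proof (cases "y = 0")
  case False
  then have "y\<^sup>2 = y powr q * y powr (2 - q)" using assms by (simp add: powr_add[symmetric])
  also have "\<dots> \<le> y powr q * \<delta> powr (2 - q)" using assms by (intro mult_left_mono powr_mono2) auto
  finally show ?thesis by (simp add: mult.commute)
qed simp

lemma le_powr_div_powr:
  fixes y \<delta> p :: real
  assumes "0 < \<delta>" "\<delta> \<le> y" "1 \<le> p"
  shows "y \<le> y powr p / \<delta> powr (p - 1)"
proof -
  have "y * \<delta> powr (p - 1) \<le> y * y powr (p - 1)" using assms by (intro mult_left_mono powr_mono2) auto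
  also have "\<dots> = y powr p" using assms powr_mult_base[of y "p - 1"] by simp
  finally show ?thesis using assms by (simp add: field_simps)
qed

lemma powr_le_one_plus_powr:
  fixes y q p :: real
  assumes "0 \<le> y" "0 < q" "q \<le> p"
  shows "y powr q \<le> 1 + y powr p"
proof (cases "y \<le> 1")
  case True
  then have "y powr q \<le> 1" using assms by (intro powr_le1) auto
  then show ?thesis by (simp add: add_increasing2)
next
  case False
  then have "y powr q \<le> y powr p" using assms by (intro powr_mono) auto
  then show ?thesis by simp
qed

lemma abs_add_powr_le:
  fixes u w p :: real
  assumes "0 \<le> p"
  shows "\<bar>u + w\<bar> powr p \<le> 2 powr p * (\<bar>u\<bar> powr p + \<bar>w\<bar> powr p)"
proof -
  have "\<bar>u + w\<bar> powr p \<le> (2 * max \<bar>u\<bar> \<bar>w\<bar>) powr p" using assms by (intro powr_mono2) auto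
  also have "\<dots> = 2 powr p * max \<bar>u\<bar> \<bar>w\<bar> powr p" by (simp add: powr_mult)
  also have "max \<bar>u\<bar> \<bar>w\<bar> powr p \<le> \<bar>u\<bar> powr p + \<bar>w\<bar> powr p" by (simp add: max_def)
  finally show ?thesis by (simp add: mult_left_mono)
qed

lemma sum_powr_le_sum_powr_powr:
  fixes a :: "'i \<Rightarrow> real" and p q :: real
  assumes "finite I" "\<And>k. k \<in> I \<Longrightarrow> 0 \<le> a k" "(\<Sum>k\<in>I. a k) \<le> 1" "0 < p" "1 \<le> q"
  shows "(\<Sum>k\<in>I. a k powr q) \<le> (\<Sum>k\<in>I. a k powr p) powr ((q - 1) / p)"
proof -
  define t where "t = (\<Sum>k\<in>I. a k powr p) powr ((q - 1) / p)"
  have "a k powr q \<le> a k * t" if k: "k \<in> I" for k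
  proof (cases "a k = 0")
    case False
    then have ak: "0 < a k" using assms(2) k by force
    have "a k powr q = a k * (a k powr p) powr ((q - 1) / p)"
      using ak assms(4) powr_mult_base[of "a k" "q - 1"] by (simp add: powr_powr)
    also have "\<dots> \<le> a k * t" unfolding t_def
      using ak assms k by (intro mult_left_mono powr_mono2 member_le_sum) auto
    finally show ?thesis .
  qed (use assms in auto)
  then have "(\<Sum>k\<in>I. a k powr q) \<le> (\<Sum>k\<in>I. a k) * t" by (simp add: sum_mono sum_distrib_right)
  also have "\<dots> \<le> t" using assms(3) by (intro mult_left_le_one_le) (auto simp: t_def assms sum_nonneg)
  finally show ?thesis unfolding t_def .
qed

text \<open>With this choice of \<open>l\<close> the linear term of the exponent produces \<open>t\<^sup>R\<close>, while the logarithmic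
  growth of \<open>l\<close> in the quadratic term is absorbed by the factor \<open>t\<close> in the variance bound.\<close>
lemma chernoff_exponent_le:
  fixes t R x V v :: real
  assumes t: "0 < t" "t \<le> 1" and R: "0 < R" and x: "0 < x" and v: "0 \<le> v" "v \<le> V * t"
  defines "l \<equiv> R * ln (2 / t) / x"
  shows "0 < l"
    and "exp (- l * x + l\<^sup>2 * exp (l * (x / (2 * R))) * v / 2) \<le> exp (16 * (R / x)\<^sup>2 * V) * t powr R"
proof -
  define L where "L = ln (2 / t)"
  have L: "0 < L" using t by (simp add: L_def)
  then show "0 < l" using R x by (simp add: l_def L_def)
  have "exp (l * (x / (2 * R))) = exp (ln (2 / t) * (1 / 2))"
    using R x by (simp add: l_def)
  also have "\<dots> = (2 / t) powr (1 / 2)" using t by (simp add: powr_def mult.commute)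
  also have "\<dots> = sqrt (2 / t)" using t by (simp add: powr_half_sqrt)
  finally have half: "exp (l * (x / (2 * R))) = sqrt (2 / t)" .
  have L2: "L\<^sup>2 \<le> 16 * sqrt (2 / t)" unfolding L_def using t by (intro ln_squared_le_sqrt) simp
  have "l\<^sup>2 * exp (l * (x / (2 * R))) * v / 2 = (R / x)\<^sup>2 * L\<^sup>2 * sqrt (2 / t) * v / 2"
    unfolding half by (simp add: l_def L_def power_mult_distrib power_divide)
  also have "\<dots> \<le> (R / x)\<^sup>2 * (16 * sqrt (2 / t)) * sqrt (2 / t) * (V * t) / 2"
    using L2 v t by (intro divide_right_mono mult_mono mult_left_mono) auto
  also have "\<dots> = 8 * (R / x)\<^sup>2 * V * (sqrt (2 / t) * sqrt (2 / t) * t)" by (simp only: mult_ac divide_inverse) simp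
  also have "sqrt (2 / t) * sqrt (2 / t) * t = 2" using t by simp
  finally have quad: "l\<^sup>2 * exp (l * (x / (2 * R))) * v / 2 \<le> 16 * (R / x)\<^sup>2 * V" by simp
  have "- l * x = R * ln t - R * ln 2" using t x by (simp add: l_def L_def ln_div field_simps)
  then have "- l * x \<le> R * ln t" using R by simp
  then have lin: "exp (- l * x) \<le> t powr R" using t by (simp add: powr_def mult.commute)
  have "exp (- l * x + l\<^sup>2 * exp (l * (x / (2 * R))) * v / 2)
      = exp (- l * x) * exp (l\<^sup>2 * exp (l * (x / (2 * R))) * v / 2)" by (rule exp_add)
  also have "\<dots> \<le> t powr R * exp (16 * (R / x)\<^sup>2 * V)" using lin quad by (intro mult_mono) auto
  finally show "exp (- l * x + l\<^sup>2 * exp (l * (x / (2 * R))) * v / 2) \<le> exp (16 * (R / x)\<^sup>2 * V) * t powr R"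
    by (simp add: mult.commute)
qed

section \<open>Cutting a divergent series into blocks\<close>

lemma sum_blocks_eq:
  fixes f :: "nat \<Rightarrow> 'b::comm_monoid_add"
  assumes "strict_mono s"
  shows "(\<Sum>j<J. \<Sum>k\<in>{s j..<s (Suc j)}. f k) = (\<Sum>k\<in>{s 0..<s J}. f k)"
proof (induction J)
  case (Suc J)
  have "s 0 \<le> s J" "s J \<le> s (Suc J)" using assms by (auto simp: strict_mono_less_eq)
  then show ?case using Suc by (simp add: sum.atLeastLessThan_concat)
qed simp

lemma summable_block_sums:
  fixes f :: "nat \<Rightarrow> real"
  assumes s: "strict_mono s" and f: "\<And>k. 0 \<le> f k" "summable f"
  shows "summable (\<lambda>j. \<Sum>k\<in>{s j..<s (Suc j)}. f k)"
proof (rule summableI_nonneg_bounded)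
  fix J
  have "(\<Sum>j<J. \<Sum>k\<in>{s j..<s (Suc j)}. f k) = (\<Sum>k\<in>{s 0..<s J}. f k)" by (rule sum_blocks_eq[OF s])
  also have "\<dots> \<le> (\<Sum>k<s J. f k)" using f by (intro sum_mono2) auto
  also have "\<dots> \<le> suminf f" using f by (intro sum_le_suminf) auto
  finally show "(\<Sum>j<J. \<Sum>k\<in>{s j..<s (Suc j)}. f k) \<le> suminf f" .
qed (use f in \<open>auto intro: sum_nonneg\<close>)

lemma eventually_all_in_blocks:
  fixes s :: "nat \<Rightarrow> nat"
  assumes s: "strict_mono s" and ev: "eventually P sequentially"
  shows "eventually (\<lambda>j. \<forall>k\<in>{s j..<s (Suc j)}. P k) sequentially"
proof -
  obtain K where K: "\<And>k. k \<ge> K \<Longrightarrow> P k" using ev unfolding eventually_sequentially by blast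
  have "P k" if "j \<ge> K" "k \<in> {s j..<s (Suc j)}" for j k
    using that strict_mono_imp_increasing[OF s, of j] by (intro K) auto
  then show ?thesis unfolding eventually_sequentially by blast
qed

lemma strict_mono_bracket:
  fixes s :: "nat \<Rightarrow> nat"
  assumes s: "strict_mono s" and n: "s 0 \<le> n"
  obtains j where "s j \<le> n" "n < s (Suc j)"
proof -
  have ex: "\<exists>j. n < s j"
    using strict_mono_imp_increasing[OF s, of "Suc n"] by (intro exI[of _ "Suc n"]) simp
  define j where "j = (LEAST j. n < s j)"
  have j: "n < s j" unfolding j_def by (rule LeastI_ex[OF ex])
  then obtain i where i: "j = Suc i" using n by (cases j) auto
  have "\<not> n < s i" using i unfolding j_def by (intro not_less_Least) simp
  then show ?thesis using j i by (intro that[of i]) (auto simp: not_less)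
qed

lemma not_summable_exists_sum_ge:
  fixes a :: "nat \<Rightarrow> real"
  assumes a: "\<And>k. i \<le> k \<Longrightarrow> 0 \<le> a k" and diverges: "\<not> summable a"
  shows "\<exists>n. i < n \<and> \<eta> \<le> (\<Sum>k\<in>{i..<n}. a k)"
proof (rule ccontr)
  assume small: "\<not> ?thesis"
  have "(\<Sum>k<n. a (k + i)) = (\<Sum>k\<in>{i..<n + i}. a k)" for n
    by (rule sum.reindex_bij_witness[where i="\<lambda>k. k - i" and j="\<lambda>k. k + i"]) auto
  moreover have "(\<Sum>k\<in>{i..<n}. a k) < \<eta>" if "i < n" for n using small that by auto
  moreover have "0 \<le> \<eta>" using small a[of i] by fastforce
  ultimately have "(\<Sum>k<n. a (k + i)) \<le> \<eta>" for n by (cases "n = 0") (auto intro: less_imp_le)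
  then have "summable (\<lambda>k. a (k + i))" using a by (intro summableI_nonneg_bounded) auto
  with diverges show False by (simp add: summable_iff_shift)
qed

text \<open>Each block ends at the first index where its mass reaches \<open>\<eta>\<close>; as its last term is at most \<open>\<eta>\<close>,
  the mass stays below \<open>2\<eta>\<close>.\<close>
lemma blocks_of_bounded_mass:
  fixes a :: "nat \<Rightarrow> real"
  assumes a: "\<And>k. N \<le> k \<Longrightarrow> 0 \<le> a k" "\<And>k. N \<le> k \<Longrightarrow> a k \<le> \<eta>"
    and \<eta>: "0 < \<eta>" and diverges: "\<not> summable a"
  obtains s where "strict_mono s" "s 0 = N"
    "\<And>j. \<eta> \<le> (\<Sum>k\<in>{s j..<s (Suc j)}. a k)" "\<And>j. (\<Sum>k\<in>{s j..<s (Suc j)}. a k) \<le> 2 * \<eta>"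
proof -
  have reach: "\<exists>n. i < n \<and> \<eta> \<le> (\<Sum>k\<in>{i..<n}. a k)" if "N \<le> i" for i
    using that a(1) diverges by (intro not_summable_exists_sum_ge) auto
  define nxt where "nxt i = (LEAST n. i < n \<and> \<eta> \<le> (\<Sum>k\<in>{i..<n}. a k))" for i
  have nxt: "i < nxt i \<and> \<eta> \<le> (\<Sum>k\<in>{i..<nxt i}. a k) \<and> (\<Sum>k\<in>{i..<nxt i}. a k) \<le> 2 * \<eta>"
    if i: "N \<le> i" for i
  proof -
    have first: "i < nxt i \<and> \<eta> \<le> (\<Sum>k\<in>{i..<nxt i}. a k)"
      unfolding nxt_def by (rule LeastI_ex[OF reach[OF i]])
    then obtain m where m: "nxt i = Suc m" "i \<le> m" by (cases "nxt i") auto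
    have "(\<Sum>k\<in>{i..<m}. a k) \<le> \<eta>"
    proof (cases "i = m")
      case False
      have "\<not> (i < m \<and> \<eta> \<le> (\<Sum>k\<in>{i..<m}. a k))"
        using m(1) unfolding nxt_def by (intro not_less_Least) simp
      then show ?thesis using m(2) False by simp
    qed (use \<eta> in simp)
    moreover have "a m \<le> \<eta>" using a(2) m i by simp
    ultimately show ?thesis using first m by simp
  qed
  define s where "s = rec_nat N (\<lambda>_. nxt)"
  have sS: "s (Suc j) = nxt (s j)" for j unfolding s_def by simp
  have sN: "N \<le> s j" for j
  proof (induction j)
    case (Suc j)
    then show ?case using nxt[OF Suc] sS[of j] by simp
  qed (simp add: s_def)
  have "strict_mono s" unfolding strict_mono_Suc_iff using nxt[OF sN] sS by simp
  then show ?thesis using that nxt[OF sN] sS by (simp add: s_def)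
qed

section \<open>The relaxation recursion\<close>

lemma relaxation_telescope:
  fixes a y e :: "nat \<Rightarrow> real"
  assumes rec: "\<And>k. s \<le> k \<Longrightarrow> e (Suc k) = (1 - a k) * e k + a k * y k" and "s \<le> n"
  shows "e n = e s + (\<Sum>k\<in>{s..<n}. a k * (y k - e k))"
  using assms(2)
proof (induction n rule: dec_induct)
  case (step n)
  then show ?case using rec[of n] by (simp add: algebra_simps)
qed simp

lemma relaxation_increment_le:
  fixes a y e :: "nat \<Rightarrow> real"
  assumes rec: "\<And>k. s \<le> k \<Longrightarrow> e (Suc k) = (1 - a k) * e k + a k * y k"
    and a: "\<And>k. s \<le> k \<Longrightarrow> 0 \<le> a k" and "s \<le> n"
  shows "\<bar>e n - e s\<bar> \<le> (\<Sum>k\<in>{s..<n}. a k * \<bar>y k\<bar>) + (\<Sum>k\<in>{s..<n}. a k * \<bar>e k\<bar>)"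
proof -
  have "\<bar>e n - e s\<bar> = \<bar>\<Sum>k\<in>{s..<n}. a k * (y k - e k)\<bar>"
    using relaxation_telescope[where e=e, OF rec \<open>s \<le> n\<close>] by simp
  also have "\<dots> \<le> (\<Sum>k\<in>{s..<n}. \<bar>a k * (y k - e k)\<bar>)" by (rule sum_abs)
  also have "\<dots> \<le> (\<Sum>k\<in>{s..<n}. a k * \<bar>y k\<bar> + a k * \<bar>e k\<bar>)"
  proof (rule sum_mono)
    fix k assume "k \<in> {s..<n}"
    then have "\<bar>a k * (y k - e k)\<bar> \<le> a k * (\<bar>y k\<bar> + \<bar>e k\<bar>)"
      using a[of k] by (auto simp: abs_mult intro!: mult_left_mono)
    then show "\<bar>a k * (y k - e k)\<bar> \<le> a k * \<bar>y k\<bar> + a k * \<bar>e k\<bar>" by (simp add: algebra_simps)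
  qed
  finally show ?thesis by (simp add: sum.distrib)
qed

lemma sum_weighted_le_mass_mult:
  fixes a f :: "nat \<Rightarrow> real"
  assumes "\<And>k. s \<le> k \<Longrightarrow> 0 \<le> a k" "\<And>k. k \<in> {s..<n} \<Longrightarrow> f k \<le> B" "n \<le> t" "0 \<le> B"
  shows "(\<Sum>k\<in>{s..<n}. a k * f k) \<le> (\<Sum>k\<in>{s..<t}. a k) * B"
proof -
  have "(\<Sum>k\<in>{s..<n}. a k * f k) \<le> (\<Sum>k\<in>{s..<n}. a k * B)"
    using assms by (intro sum_mono mult_left_mono) auto
  also have "\<dots> = (\<Sum>k\<in>{s..<n}. a k) * B" by (simp add: sum_distrib_right)
  also have "\<dots> \<le> (\<Sum>k\<in>{s..<t}. a k) * B" using assms by (intro mult_right_mono sum_mono2) auto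
  finally show ?thesis .
qed

lemma relaxation_block_bound:
  fixes a y e :: "nat \<Rightarrow> real"
  assumes rec: "\<And>k. s \<le> k \<Longrightarrow> e (Suc k) = (1 - a k) * e k + a k * y k"
    and a: "\<And>k. s \<le> k \<Longrightarrow> 0 \<le> a k" and mass: "(\<Sum>k\<in>{s..<t}. a k) \<le> 1/2"
    and n: "s \<le> n" "n \<le> t"
  shows "\<bar>e n\<bar> \<le> 2 * (\<bar>e s\<bar> + (\<Sum>k\<in>{s..<t}. a k * \<bar>y k\<bar>))"
  using n
proof (induction n rule: less_induct)
  case (less n)
  define B where "B = 2 * (\<bar>e s\<bar> + (\<Sum>k\<in>{s..<t}. a k * \<bar>y k\<bar>))"
  have B: "0 \<le> B" unfolding B_def using a by (auto intro!: add_nonneg_nonneg sum_nonneg)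
  have "(\<Sum>k\<in>{s..<n}. a k * \<bar>e k\<bar>) \<le> (\<Sum>k\<in>{s..<t}. a k) * B"
    using less a B unfolding B_def by (intro sum_weighted_le_mass_mult) auto
  also have "\<dots> \<le> 1/2 * B" using mass B by (intro mult_right_mono)
  finally have "(\<Sum>k\<in>{s..<n}. a k * \<bar>e k\<bar>) \<le> B / 2" by simp
  moreover have "(\<Sum>k\<in>{s..<n}. a k * \<bar>y k\<bar>) \<le> (\<Sum>k\<in>{s..<t}. a k * \<bar>y k\<bar>)"
    using less.prems a by (intro sum_mono2) auto
  moreover have "\<bar>e n - e s\<bar> \<le> (\<Sum>k\<in>{s..<n}. a k * \<bar>y k\<bar>) + (\<Sum>k\<in>{s..<n}. a k * \<bar>e k\<bar>)"
    using less.prems by (intro relaxation_increment_le[where a=a and y=y and e=e, OF rec a]) auto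
  moreover have "\<bar>e n\<bar> \<le> \<bar>e s\<bar> + \<bar>e n - e s\<bar>" by arith
  ultimately show ?case unfolding B_def by argo
qed

lemma relaxation_block_drift:
  fixes a y e :: "nat \<Rightarrow> real"
  assumes rec: "\<And>k. s \<le> k \<Longrightarrow> e (Suc k) = (1 - a k) * e k + a k * y k"
    and a: "\<And>k. s \<le> k \<Longrightarrow> 0 \<le> a k" and mass: "(\<Sum>k\<in>{s..<t}. a k) \<le> 1/2"
    and n: "s \<le> n" "n \<le> t"
  shows "\<bar>e n - e s\<bar> \<le> (\<Sum>k\<in>{s..<t}. a k * \<bar>y k\<bar>)
           + (\<Sum>k\<in>{s..<t}. a k) * (2 * (\<bar>e s\<bar> + (\<Sum>k\<in>{s..<t}. a k * \<bar>y k\<bar>)))"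
proof -
  have "\<bar>e n - e s\<bar> \<le> (\<Sum>k\<in>{s..<n}. a k * \<bar>y k\<bar>) + (\<Sum>k\<in>{s..<n}. a k * \<bar>e k\<bar>)"
    using n by (intro relaxation_increment_le[where a=a and y=y and e=e, OF rec a])
  moreover have "(\<Sum>k\<in>{s..<n}. a k * \<bar>y k\<bar>) \<le> (\<Sum>k\<in>{s..<t}. a k * \<bar>y k\<bar>)"
    using n a by (intro sum_mono2) auto
  moreover have "(\<Sum>k\<in>{s..<n}. a k * \<bar>e k\<bar>)
      \<le> (\<Sum>k\<in>{s..<t}. a k) * (2 * (\<bar>e s\<bar> + (\<Sum>k\<in>{s..<t}. a k * \<bar>y k\<bar>)))"
    using n a relaxation_block_bound[where a=a and y=y and e=e, OF rec a mass]
    by (intro sum_weighted_le_mass_mult) (auto intro!: add_nonneg_nonneg sum_nonneg)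
  ultimately show ?thesis by linarith
qed

text \<open>Over a block of mass \<open>m \<in> [\<eta>, 2\<eta>]\<close> the error contracts by the factor \<open>1 - m + 2m\<^sup>2 \<le> 1 - \<eta>/2\<close>,
  up to the block sum of the noise and a second-order term.\<close>
lemma relaxation_block_contraction:
  fixes a y e :: "nat \<Rightarrow> real"
  assumes rec: "\<And>k. s \<le> k \<Longrightarrow> e (Suc k) = (1 - a k) * e k + a k * y k"
    and a: "\<And>k. s \<le> k \<Longrightarrow> 0 \<le> a k"
    and mass: "\<eta> \<le> (\<Sum>k\<in>{s..<t}. a k)" "(\<Sum>k\<in>{s..<t}. a k) \<le> 2 * \<eta>" and \<eta>: "\<eta> \<le> 1/8"
    and "s \<le> t"
  shows "\<bar>e t\<bar> \<le> (1 - \<eta>/2) * \<bar>e s\<bar> + \<bar>\<Sum>k\<in>{s..<t}. a k * y k\<bar>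
           + 3 * \<eta> * (\<Sum>k\<in>{s..<t}. a k * \<bar>y k\<bar>)"
proof -
  define T where "T = (\<Sum>k\<in>{s..<t}. a k * \<bar>y k\<bar>)"
  define m where "m = (\<Sum>k\<in>{s..<t}. a k)"
  define S where "S = (\<Sum>k\<in>{s..<t}. a k * y k)"
  define D where "D = T + m * (2 * (\<bar>e s\<bar> + T))"
  have T: "0 \<le> T" unfolding T_def using a by (intro sum_nonneg) auto
  have m: "\<eta> \<le> m" "m \<le> 1/4" "0 \<le> m" using mass \<eta> a unfolding m_def by (auto intro: sum_nonneg)
  have D: "0 \<le> D" unfolding D_def using T m \<eta> mass by (intro add_nonneg_nonneg mult_nonneg_nonneg) auto
  have "e t = e s + (\<Sum>k\<in>{s..<t}. a k * (y k - e k))"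
    by (rule relaxation_telescope[where e=e, OF rec \<open>s \<le> t\<close>])
  also have "(\<Sum>k\<in>{s..<t}. a k * (y k - e k)) = S - m * e s - (\<Sum>k\<in>{s..<t}. a k * (e k - e s))"
    unfolding S_def m_def
    by (simp add: algebra_simps sum_subtractf sum_distrib_right sum_distrib_left mult.commute)
  finally have et: "e t = (1 - m) * e s + S - (\<Sum>k\<in>{s..<t}. a k * (e k - e s))"
    by (simp add: algebra_simps)
  have "\<bar>\<Sum>k\<in>{s..<t}. a k * (e k - e s)\<bar> \<le> (\<Sum>k\<in>{s..<t}. a k * \<bar>e k - e s\<bar>)"
    using a by (auto simp: abs_mult intro: order.trans[OF sum_abs] sum_mono)
  also have "\<dots> \<le> m * D"
    unfolding m_def D_def T_def using a D \<open>s \<le> t\<close> m(2)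
    by (intro sum_weighted_le_mass_mult relaxation_block_drift[where a=a and y=y and e=e, OF rec a])
       (auto simp: m_def T_def D_def)
  finally have drift: "\<bar>\<Sum>k\<in>{s..<t}. a k * (e k - e s)\<bar> \<le> m * D" .
  have "\<bar>(1 - m) * e s\<bar> = (1 - m) * \<bar>e s\<bar>" using m by (simp add: abs_mult)
  then have "\<bar>e t\<bar> \<le> (1 - m) * \<bar>e s\<bar> + \<bar>S\<bar> + m * D" unfolding et using drift by linarith
  moreover have "m * m \<le> m * (1/4)" using m by (intro mult_left_mono) auto
  then have "(1 - m + 2 * m * m) * \<bar>e s\<bar> \<le> (1 - \<eta>/2) * \<bar>e s\<bar>"
    and "(m + 2 * m * m) * T \<le> 3 * \<eta> * T"
    using m mass T unfolding m_def by (auto intro!: mult_right_mono)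
  moreover have "(1 - m) * \<bar>e s\<bar> + m * D = (1 - m + 2 * m * m) * \<bar>e s\<bar> + (m + 2 * m * m) * T"
    unfolding D_def by algebra
  ultimately show ?thesis unfolding S_def[symmetric] T_def[symmetric] by argo
qed

lemma eventually_le_of_contraction:
  fixes u :: "nat \<Rightarrow> real"
  assumes ev: "eventually (\<lambda>j. u (Suc j) \<le> (1 - c) * u j + c * L) sequentially"
    and c: "0 < c" "c \<le> 1" and \<epsilon>: "0 < \<epsilon>"
  shows "eventually (\<lambda>j. u j \<le> L + \<epsilon>) sequentially"
proof -
  obtain J where J: "\<And>j. j \<ge> J \<Longrightarrow> u (Suc j) \<le> (1 - c) * u j + c * L"
    using ev unfolding eventually_sequentially by blast
  define v where "v j = max (u j - L) 0" for j
  have v_step: "v (Suc j) \<le> (1 - c) * v j" if "j \<ge> J" for j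
  proof -
    have "u (Suc j) - L \<le> (1 - c) * (u j - L)" using J[OF that] by (simp add: algebra_simps)
    also have "\<dots> \<le> (1 - c) * v j" using c unfolding v_def by (intro mult_left_mono) auto
    finally show ?thesis using c unfolding v_def by simp
  qed
  have v_le: "v (J + i) \<le> (1 - c) ^ i * v J" for i
  proof (induction i)
    case (Suc i)
    have "v (J + Suc i) \<le> (1 - c) * v (J + i)" using v_step[of "J + i"] by simp
    also have "\<dots> \<le> (1 - c) * ((1 - c) ^ i * v J)" using Suc c by (intro mult_left_mono) auto
    finally show ?case by simp
  qed simp
  have "(\<lambda>i. (1 - c) ^ i * v J) \<longlonglongrightarrow> 0 * v J"
    using c by (intro tendsto_mult LIMSEQ_power_zero) auto
  then have "eventually (\<lambda>i. (1 - c) ^ i * v J < \<epsilon>) sequentially"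
    using \<epsilon> by (intro order_tendstoD) auto
  then have "eventually (\<lambda>i. v (J + i) < \<epsilon>) sequentially"
    by eventually_elim (use v_le in \<open>rule order.strict_trans1\<close>)
  then have "eventually (\<lambda>j. v j < \<epsilon>) sequentially"
    by (subst eventually_sequentially_seg[of _ J, symmetric]) (simp add: add.commute)
  then show ?thesis by eventually_elim (simp add: v_def)
qed

lemma relaxation_eventually_small:
  fixes a y e :: "nat \<Rightarrow> real" and s :: "nat \<Rightarrow> nat" and \<eta> C :: real
  assumes s: "strict_mono s"
    and rec: "\<And>k. s 0 \<le> k \<Longrightarrow> e (Suc k) = (1 - a k) * e k + a k * y k"
    and a: "\<And>k. s 0 \<le> k \<Longrightarrow> 0 \<le> a k"
    and mass: "\<And>j. \<eta> \<le> (\<Sum>k\<in>{s j..<s (Suc j)}. a k)" "\<And>j. (\<Sum>k\<in>{s j..<s (Suc j)}. a k) \<le> 2 * \<eta>"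
    and \<eta>: "0 < \<eta>" "\<eta> \<le> 1/8" and C: "0 \<le> C"
    and sum_small: "eventually (\<lambda>j. \<bar>\<Sum>k\<in>{s j..<s (Suc j)}. a k * y k\<bar> \<le> \<eta> * \<eta>) sequentially"
    and abs_sum_small: "eventually (\<lambda>j. (\<Sum>k\<in>{s j..<s (Suc j)}. a k * \<bar>y k\<bar>) \<le> C * \<eta>) sequentially"
  shows "eventually (\<lambda>n. \<bar>e n\<bar> \<le> (6 + 14 * C) * \<eta>) sequentially"
proof -
  have s_le: "s 0 \<le> s j" "s j \<le> s (Suc j)" for j using s by (auto simp: strict_mono_less_eq)
  have rec_j: "\<And>k. s j \<le> k \<Longrightarrow> e (Suc k) = (1 - a k) * e k + a k * y k"
    and a_j: "\<And>k. s j \<le> k \<Longrightarrow> 0 \<le> a k" for j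
    using rec a s_le(1)[of j] by auto
  define u where "u j = \<bar>e (s j)\<bar>" for j
  have "eventually (\<lambda>j. u (Suc j) \<le> (1 - \<eta>/2) * u j + \<eta>/2 * (2 * (1 + 3 * C) * \<eta>)) sequentially"
    using sum_small abs_sum_small
  proof eventually_elim
    case (elim j)
    have "3 * \<eta> * (\<Sum>k\<in>{s j..<s (Suc j)}. a k * \<bar>y k\<bar>) \<le> 3 * \<eta> * (C * \<eta>)"
      using elim(2) \<eta> by (intro mult_left_mono) auto
    then show ?case
      using relaxation_block_contraction[OF rec_j[of j] a_j[of j] mass(1,2)[of j] \<eta>(2) s_le(2)] elim(1)
      by (simp add: u_def algebra_simps)
  qed
  then have "eventually (\<lambda>j. u j \<le> 2 * (1 + 3 * C) * \<eta> + \<eta>) sequentially"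
    using \<eta> by (intro eventually_le_of_contraction[where c="\<eta>/2"]) auto
  then have "eventually (\<lambda>j. u j \<le> 2 * (1 + 3 * C) * \<eta> + \<eta> \<and>
      (\<Sum>k\<in>{s j..<s (Suc j)}. a k * \<bar>y k\<bar>) \<le> C * \<eta>) sequentially"
    using abs_sum_small by (rule eventually_conj)
  then obtain J where J: "\<And>j. j \<ge> J \<Longrightarrow> u j \<le> 2 * (1 + 3 * C) * \<eta> + \<eta> \<and>
      (\<Sum>k\<in>{s j..<s (Suc j)}. a k * \<bar>y k\<bar>) \<le> C * \<eta>"
    unfolding eventually_sequentially by blast
  have "\<bar>e n\<bar> \<le> (6 + 14 * C) * \<eta>" if n: "n \<ge> s J" for n
  proof -
    have "s 0 \<le> n" using n s_le(1)[of J] by linarith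
    then obtain j where j: "s j \<le> n" "n < s (Suc j)" by (rule strict_mono_bracket[OF s])
    have "s J < s (Suc j)" using n j by linarith
    then have "J \<le> j" using strict_mono_less[OF s] by simp
    have "(\<Sum>k\<in>{s j..<s (Suc j)}. a k) \<le> 1/2" using mass(2)[of j] \<eta> by simp
    then have "\<bar>e n\<bar> \<le> 2 * (\<bar>e (s j)\<bar> + (\<Sum>k\<in>{s j..<s (Suc j)}. a k * \<bar>y k\<bar>))"
      using j by (intro relaxation_block_bound[where a=a and y=y and e=e, OF rec_j[of j] a_j[of j]]) auto
    also have "\<dots> \<le> 2 * ((2 * (1 + 3 * C) * \<eta> + \<eta>) + C * \<eta>)"
      using J[OF \<open>J \<le> j\<close>] unfolding u_def by (intro mult_left_mono add_mono) auto
    finally show ?thesis by (simp add: algebra_simps)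
  qed
  then show ?thesis unfolding eventually_sequentially by blast
qed

section \<open>Chernoff bounds\<close>

lemma (in prob_space) expectation_exp_le_of_bounded_centered:
  fixes U :: "'a \<Rightarrow> real"
  assumes [measurable]: "U \<in> borel_measurable M"
    and bounded: "\<And>x. x \<in> space M \<Longrightarrow> \<bar>U x\<bar> \<le> c" and centered: "expectation U = 0" and l: "0 < l"
  shows "expectation (\<lambda>x. exp (l * U x)) \<le> exp (l\<^sup>2 * exp (l * c) * expectation (\<lambda>x. (U x)\<^sup>2) / 2)"
proof -
  have int_U: "integrable M U"
    using bounded by (intro integrable_const_bound[where B=c]) auto
  have int_U2: "integrable M (\<lambda>x. (U x)\<^sup>2)"
    using bounded power_mono[of "\<bar>U x\<bar>" c 2 for x] by (intro integrable_const_bound[where B="c\<^sup>2"]) auto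
  have int_exp: "integrable M (\<lambda>x. exp (l * U x))"
    using bounded l by (intro integrable_const_bound[where B="exp (l * c)"]) (auto simp: abs_le_iff)
  have "expectation (\<lambda>x. exp (l * U x)) \<le> expectation (\<lambda>x. 1 + l * U x + (l * U x)\<^sup>2 * exp (l * c) / 2)"
    using int_U int_U2 int_exp bounded l
    by (intro integral_mono exp_le_one_plus_quadratic)
       (auto simp: power_mult_distrib abs_mult intro: mult_left_mono)
  also have "\<dots> = 1 + l\<^sup>2 * exp (l * c) * expectation (\<lambda>x. (U x)\<^sup>2) / 2"
    using int_U int_U2 centered by (simp add: power_mult_distrib field_simps prob_space)
  also have "\<dots> \<le> exp (l\<^sup>2 * exp (l * c) * expectation (\<lambda>x. (U x)\<^sup>2) / 2)"
    by (rule exp_ge_add_one_self)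
  finally show ?thesis .
qed

lemma (in prob_space) prob_sum_ge_le_exp:
  fixes U :: "nat \<Rightarrow> 'a \<Rightarrow> real" and I :: "nat set"
  assumes I: "finite I" and indep: "indep_vars (\<lambda>_. borel) U I"
    and rv: "\<And>k. k \<in> I \<Longrightarrow> U k \<in> borel_measurable M"
    and bounded: "\<And>k x. k \<in> I \<Longrightarrow> x \<in> space M \<Longrightarrow> \<bar>U k x\<bar> \<le> c"
    and centered: "\<And>k. k \<in> I \<Longrightarrow> expectation (U k) = 0"
    and l: "0 < l"
  shows "prob {x \<in> space M. \<epsilon> \<le> (\<Sum>k\<in>I. U k x)}
           \<le> exp (- l * \<epsilon> + l\<^sup>2 * exp (l * c) * (\<Sum>k\<in>I. expectation (\<lambda>x. (U k x)\<^sup>2)) / 2)"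
proof -
  have int_exp: "integrable M (\<lambda>x. exp (l * U k x))" if "k \<in> I" for k
    using that rv bounded l
    by (intro integrable_const_bound[where B="exp (l * c)"]) (auto intro!: mult_left_mono simp: abs_le_iff)
  have indep_exp: "indep_vars (\<lambda>_. borel) (\<lambda>k x. exp (l * U k x)) I"
    by (rule indep_vars_compose2[OF indep]) auto
  have exp_of_sum: "(\<lambda>x. exp (l * (\<Sum>k\<in>I. U k x))) = (\<lambda>x. \<Prod>k\<in>I. exp (l * U k x))"
    using I by (simp add: sum_distrib_left exp_sum)
  have "expectation (\<lambda>x. exp (l * (\<Sum>k\<in>I. U k x))) = (\<Prod>k\<in>I. expectation (\<lambda>x. exp (l * U k x)))"
    unfolding exp_of_sum using indep_vars_lebesgue_integral[OF I indep_exp int_exp] by simp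
  also have "\<dots> \<le> (\<Prod>k\<in>I. exp (l\<^sup>2 * exp (l * c) * expectation (\<lambda>x. (U k x)\<^sup>2) / 2))"
    using rv bounded centered l
    by (intro prod_mono conjI integral_nonneg_AE expectation_exp_le_of_bounded_centered) auto
  also have "\<dots> = exp (l\<^sup>2 * exp (l * c) * (\<Sum>k\<in>I. expectation (\<lambda>x. (U k x)\<^sup>2)) / 2)"
    using I by (simp add: exp_sum sum_distrib_left sum_divide_distrib)
  finally have mgf: "expectation (\<lambda>x. exp (l * (\<Sum>k\<in>I. U k x)))
      \<le> exp (l\<^sup>2 * exp (l * c) * (\<Sum>k\<in>I. expectation (\<lambda>x. (U k x)\<^sup>2)) / 2)" .
  have "prob {x \<in> space M. \<epsilon> \<le> (\<Sum>k\<in>I. U k x)}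
      = prob {x \<in> space M. exp (l * \<epsilon>) \<le> exp (l * (\<Sum>k\<in>I. U k x))}"
    using l by simp
  also have "\<dots> \<le> expectation (\<lambda>x. exp (l * (\<Sum>k\<in>I. U k x))) / exp (l * \<epsilon>)"
    using indep_vars_integrable[OF I indep_exp int_exp] rv unfolding exp_of_sum[symmetric]
    by (intro integral_Markov_inequality_measure[where A="space M"]) auto
  also have "\<dots> \<le> exp (l\<^sup>2 * exp (l * c) * (\<Sum>k\<in>I. expectation (\<lambda>x. (U k x)\<^sup>2)) / 2) / exp (l * \<epsilon>)"
    using mgf by (intro divide_right_mono) auto
  also have "\<dots> = exp (- l * \<epsilon> + l\<^sup>2 * exp (l * c) * (\<Sum>k\<in>I. expectation (\<lambda>x. (U k x)\<^sup>2)) / 2)"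
    by (subst exp_diff[symmetric]) (simp add: algebra_simps)
  finally show ?thesis .
qed

lemma (in prob_space) prob_sum_ge_le_powr:
  fixes U :: "nat \<Rightarrow> 'a \<Rightarrow> real" and I :: "nat set"
  assumes "finite I" and "indep_vars (\<lambda>_. borel) U I"
    and "\<And>k. k \<in> I \<Longrightarrow> U k \<in> borel_measurable M"
    and "\<And>k x. k \<in> I \<Longrightarrow> x \<in> space M \<Longrightarrow> \<bar>U k x\<bar> \<le> \<epsilon> / (2 * R)"
    and "\<And>k. k \<in> I \<Longrightarrow> expectation (U k) = 0"
    and variance: "(\<Sum>k\<in>I. expectation (\<lambda>x. (U k x)\<^sup>2)) \<le> V * t"
    and t: "0 < t" "t \<le> 1" and "0 < R" "0 < \<epsilon>"
  shows "prob {x \<in> space M. \<epsilon> \<le> (\<Sum>k\<in>I. U k x)} \<le> exp (16 * (R / \<epsilon>)\<^sup>2 * V) * t powr R"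
proof -
  define l where "l = R * ln (2 / t) / \<epsilon>"
  have v: "0 \<le> (\<Sum>k\<in>I. expectation (\<lambda>x. (U k x)\<^sup>2))" by (intro sum_nonneg integral_nonneg_AE) auto
  note exponent = chernoff_exponent_le[OF t \<open>0 < R\<close> \<open>0 < \<epsilon>\<close> v variance, folded l_def]
  show ?thesis
    using prob_sum_ge_le_exp[OF assms(1-5) exponent(1), of \<epsilon>] exponent(2) by linarith
qed

section \<open>Truncated i.i.d. sequences\<close>

lemma (in prob_space) integrable_abs_powr_mono:
  fixes f :: "'a \<Rightarrow> real"
  assumes [measurable]: "f \<in> borel_measurable M"
    and "integrable M (\<lambda>x. \<bar>f x\<bar> powr p)" "0 < q" "q \<le> p"
  shows "integrable M (\<lambda>x. \<bar>f x\<bar> powr q)"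
proof (rule Bochner_Integration.integrable_bound)
  show "integrable M (\<lambda>x. 1 + \<bar>f x\<bar> powr p)" using assms by simp
  show "AE x in M. norm (\<bar>f x\<bar> powr q) \<le> norm (1 + \<bar>f x\<bar> powr p)"
    using assms by (intro AE_I2) (simp add: powr_le_one_plus_powr)
qed measurable

lemma (in prob_space) integrable_abs_add_powr:
  fixes f :: "'a \<Rightarrow> real"
  assumes [measurable]: "f \<in> borel_measurable M" and "integrable M (\<lambda>x. \<bar>f x\<bar> powr p)" "0 \<le> p"
  shows "integrable M (\<lambda>x. \<bar>f x + c\<bar> powr p)"
proof (rule Bochner_Integration.integrable_bound)
  show "integrable M (\<lambda>x. 2 powr p * (\<bar>f x\<bar> powr p + \<bar>c\<bar> powr p))" using assms by simp
  show "AE x in M. norm (\<bar>f x + c\<bar> powr p) \<le> norm (2 powr p * (\<bar>f x\<bar> powr p + \<bar>c\<bar> powr p))"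
    using assms by (intro AE_I2) (simp add: abs_add_powr_le)
qed measurable

locale iid_sequence = prob_space +
  fixes X :: "nat \<Rightarrow> 'a \<Rightarrow> real"
  assumes measurable_X [measurable]: "\<And>k. X k \<in> borel_measurable M"
    and indep_X: "indep_vars (\<lambda>_. borel) X UNIV"
    and distr_X: "\<And>k. distr M borel (X k) = distr M borel (X 0)"
begin

lemma distr_comp:
  fixes g :: "real \<Rightarrow> real"
  assumes "g \<in> borel_measurable borel"
  shows "distr M borel (\<lambda>x. g (X k x)) = distr M borel (\<lambda>x. g (X 0 x))"
proof -
  have "distr M borel (\<lambda>x. g (X i x)) = distr (distr M borel (X i)) borel g" for i
    using assms by (subst distr_distr) (auto simp: comp_def)
  then show ?thesis using distr_X[of k] by simp
qed

lemma integrable_comp_iff: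
  fixes g :: "real \<Rightarrow> real"
  assumes "g \<in> borel_measurable borel"
  shows "integrable M (\<lambda>x. g (X k x)) \<longleftrightarrow> integrable M (\<lambda>x. g (X 0 x))"
  using integrable_distr_eq[OF measurable_X[of k] assms] integrable_distr_eq[OF measurable_X[of 0] assms]
    distr_X[of k] by simp

lemma integral_comp_eq:
  fixes g :: "real \<Rightarrow> real"
  assumes "g \<in> borel_measurable borel"
  shows "(\<integral>x. g (X k x) \<partial>M) = (\<integral>x. g (X 0 x) \<partial>M)"
  using integral_distr[OF measurable_X[of k] assms] integral_distr[OF measurable_X[of 0] assms]
    distr_X[of k] by simp

lemma iid_sequence_comp:
  fixes g :: "real \<Rightarrow> real"
  assumes [measurable]: "g \<in> borel_measurable borel"
  shows "iid_sequence M (\<lambda>k x. g (X k x))"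
proof (intro iid_sequence.intro iid_sequence_axioms.intro)
  show "indep_vars (\<lambda>_. borel) (\<lambda>k x. g (X k x)) UNIV"
    by (intro indep_vars_compose2[OF indep_X]) auto
  show "distr M borel (\<lambda>x. g (X k x)) = distr M borel (\<lambda>x. g (X 0 x))" for k
    by (rule distr_comp[OF assms])
qed (simp_all add: prob_space_axioms)

text \<open>First Borel--Cantelli lemma, with Markov's inequality for the \<open>p\<close>-th moment.\<close>
lemma AE_eventually_weighted_le:
  fixes a :: "nat \<Rightarrow> real"
  assumes p: "0 < p" and moment: "integrable M (\<lambda>x. \<bar>X 0 x\<bar> powr p)"
    and a: "\<And>k. 0 \<le> a k" "summable (\<lambda>k. a k powr p)" and \<delta>: "0 < \<delta>"
  shows "AE x in M. eventually (\<lambda>k. a k * \<bar>X k x\<bar> \<le> \<delta>) sequentially"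
proof -
  define m where "m = expectation (\<lambda>x. \<bar>X 0 x\<bar> powr p)"
  define A where "A k = {x \<in> space M. \<delta> powr p \<le> a k powr p * \<bar>X k x\<bar> powr p}" for k
  have [measurable]: "A k \<in> sets M" for k unfolding A_def by measurable
  have "measure M (A k) \<le> a k powr p * m / \<delta> powr p" for k
  proof -
    have "integrable M (\<lambda>x. \<bar>X k x\<bar> powr p)"
      using moment integrable_comp_iff[of "\<lambda>v. \<bar>v\<bar> powr p" k] by simp
    then have "measure M (A k) \<le> expectation (\<lambda>x. a k powr p * \<bar>X k x\<bar> powr p) / \<delta> powr p"
      unfolding A_def using \<delta> by (intro integral_Markov_inequality_measure[where A="space M"]) auto
    also have "expectation (\<lambda>x. a k powr p * \<bar>X k x\<bar> powr p) = a k powr p * m"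
      using integral_comp_eq[of "\<lambda>v. \<bar>v\<bar> powr p" k] by (simp add: m_def)
    finally show ?thesis .
  qed
  then have summable_A: "summable (\<lambda>k. measure M (A k))"
    by (intro summable_comparison_test'[OF summable_divide[OF summable_mult2[OF a(2)]]]) auto
  have le: "a k * \<bar>X k x\<bar> \<le> \<delta>" if "x \<notin> A k" "x \<in> space M" for k x
  proof (rule ccontr)
    assume "\<not> a k * \<bar>X k x\<bar> \<le> \<delta>"
    then have "\<delta> powr p \<le> (a k * \<bar>X k x\<bar>) powr p" using p \<delta> by (intro powr_mono2) auto
    then show False using that a(1)[of k] by (simp add: A_def powr_mult)
  qed
  have "AE x in M. eventually (\<lambda>k. x \<in> space M - A k) sequentially"
    using summable_A by (intro borel_cantelli_AE1) (auto simp: emeasure_eq_measure)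
  with AE_space show ?thesis
  proof eventually_elim
    case (elim x)
    from elim(2) show ?case by eventually_elim (intro le, use elim(1) in auto)
  qed
qed

end

definition truncated :: "real \<Rightarrow> real \<Rightarrow> real" where
  "truncated \<delta> v = (if \<bar>v\<bar> \<le> \<delta> then v else 0)"

lemma truncated_measurable [measurable]: "truncated \<delta> \<in> borel_measurable borel"
  unfolding truncated_def by measurable

lemma abs_truncated_le: "\<bar>truncated \<delta> v\<bar> \<le> \<bar>v\<bar>" "0 \<le> \<delta> \<Longrightarrow> \<bar>truncated \<delta> v\<bar> \<le> \<delta>"
  by (auto simp: truncated_def)

locale centered_iid = iid_sequence +
  fixes p :: real
  assumes one_less_p: "1 < p"
    and integrable_powr_X0: "integrable M (\<lambda>x. \<bar>X 0 x\<bar> powr p)"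
    and expectation_X0: "expectation (X 0) = 0"
begin

lemma integrable_powr_X:
  assumes "0 < q" "q \<le> p"
  shows "integrable M (\<lambda>x. \<bar>X k x\<bar> powr q)"
proof -
  have "integrable M (\<lambda>x. \<bar>X 0 x\<bar> powr q)"
    by (rule integrable_abs_powr_mono[OF measurable_X integrable_powr_X0 assms])
  moreover have "(\<lambda>v. \<bar>v\<bar> powr q) \<in> borel_measurable borel" by measurable
  ultimately show ?thesis using integrable_comp_iff by blast
qed

lemma integrable_X: "integrable M (X k)"
proof -
  have "integrable M (\<lambda>x. \<bar>X k x\<bar>)" using integrable_powr_X[of 1 k] one_less_p by simp
  then show ?thesis by (subst integrable_abs_iff[symmetric]) auto
qed

lemma expectation_X: "expectation (X k) = 0"
  using integral_comp_eq[of "\<lambda>v. v" k] expectation_X0 by simp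

lemma integrable_truncated: "integrable M (\<lambda>x. truncated \<delta> (c * X k x))"
proof (rule Bochner_Integration.integrable_bound)
  show "integrable M (\<lambda>x. c * X k x)" using integrable_X[of k] by simp
  show "AE x in M. norm (truncated \<delta> (c * X k x)) \<le> norm (c * X k x)"
    using abs_truncated_le(1) by (intro AE_I2) simp
qed measurable

text \<open>As \<open>c X\<^sub>k\<close> has mean zero, the bias equals the mean of the discarded tail, which the \<open>p\<close>-th
  moment controls.\<close>
lemma abs_expectation_truncated_le:
  assumes c: "0 \<le> c" and \<delta>: "0 < \<delta>"
  shows "\<bar>expectation (\<lambda>x. truncated \<delta> (c * X k x))\<bar>
    \<le> c powr p * expectation (\<lambda>x. \<bar>X 0 x\<bar> powr p) / \<delta> powr (p - 1)"
proof -
  have "expectation (\<lambda>x. truncated \<delta> (c * X k x)) = expectation (\<lambda>x. truncated \<delta> (c * X k x) - c * X k x)"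
    using integrable_truncated[of \<delta> c k] integrable_X[of k] expectation_X[of k] by simp
  also have "\<bar>\<dots>\<bar> \<le> expectation (\<lambda>x. c powr p * \<bar>X k x\<bar> powr p / \<delta> powr (p - 1))"
  proof (rule order.trans[OF integral_abs_bound integral_mono])
    show "integrable M (\<lambda>x. c powr p * \<bar>X k x\<bar> powr p / \<delta> powr (p - 1))"
      using integrable_powr_X[of p k] one_less_p by simp
    show "\<bar>truncated \<delta> (c * X k x) - c * X k x\<bar> \<le> c powr p * \<bar>X k x\<bar> powr p / \<delta> powr (p - 1)" for x
      using le_powr_div_powr[of \<delta> "\<bar>c * X k x\<bar>" p] \<delta> c one_less_p
      by (auto simp: truncated_def abs_mult powr_mult)
  qed (use integrable_truncated[of \<delta> c k] integrable_X[of k] in auto)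
  also have "\<dots> = c powr p * expectation (\<lambda>x. \<bar>X 0 x\<bar> powr p) / \<delta> powr (p - 1)"
    using integral_comp_eq[of "\<lambda>v. \<bar>v\<bar> powr p" k] by simp
  finally show ?thesis .
qed

definition centered_truncation :: "real \<Rightarrow> real \<Rightarrow> nat \<Rightarrow> 'a \<Rightarrow> real" where
  "centered_truncation \<delta> c k x = truncated \<delta> (c * X k x) - expectation (\<lambda>y. truncated \<delta> (c * X k y))"

lemma centered_truncation_measurable [measurable]: "centered_truncation \<delta> c k \<in> borel_measurable M"
  unfolding centered_truncation_def by measurable

lemma centered_truncation_zero_weight: "centered_truncation \<delta> 0 k x = 0"
  by (simp add: centered_truncation_def truncated_def)

lemma abs_centered_truncation_le:
  assumes "0 \<le> \<delta>"
  shows "\<bar>centered_truncation \<delta> c k x\<bar> \<le> 2 * \<delta>"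
proof -
  have "\<bar>expectation (\<lambda>y. truncated \<delta> (c * X k y))\<bar> \<le> expectation (\<lambda>y. \<delta>)"
    using integrable_truncated abs_truncated_le(2)[OF assms]
    by (intro order.trans[OF integral_abs_bound integral_mono]) auto
  then show ?thesis
    using abs_truncated_le(2)[OF assms, of "c * X k x"] by (simp add: centered_truncation_def prob_space)
qed

lemma expectation_centered_truncation: "expectation (centered_truncation \<delta> c k) = 0"
  using integrable_truncated[of \<delta> c k] by (simp add: centered_truncation_def[abs_def] prob_space)

lemma expectation_centered_truncation_square_le:
  assumes c: "0 \<le> c" and \<delta>: "0 \<le> \<delta>" and q: "0 < q" "q \<le> 2" "q \<le> p"
  shows "expectation (\<lambda>x. (centered_truncation \<delta> c k x)\<^sup>2)
    \<le> \<delta> powr (2 - q) * c powr q * expectation (\<lambda>x. \<bar>X 0 x\<bar> powr q)"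
proof -
  define \<tau> where "\<tau> = (\<lambda>x. truncated \<delta> (c * X k x))"
  have int_\<tau>: "integrable M \<tau>" unfolding \<tau>_def by (rule integrable_truncated)
  have int_\<tau>2: "integrable M (\<lambda>x. (\<tau> x)\<^sup>2)"
    using abs_truncated_le(2)[OF \<delta>] power_mono[of "\<bar>\<tau> x\<bar>" \<delta> 2 for x]
    by (intro integrable_const_bound[where B="\<delta>\<^sup>2"]) (auto simp: \<tau>_def)
  have "expectation (\<lambda>x. (centered_truncation \<delta> c k x)\<^sup>2) = variance \<tau>"
    by (simp add: centered_truncation_def \<tau>_def)
  also have "\<dots> = expectation (\<lambda>x. (\<tau> x)\<^sup>2) - (expectation \<tau>)\<^sup>2" by (rule variance_eq[OF int_\<tau> int_\<tau>2])
  also have "\<dots> \<le> expectation (\<lambda>x. (\<tau> x)\<^sup>2)" by simp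
  also have "\<dots> \<le> expectation (\<lambda>x. \<delta> powr (2 - q) * c powr q * \<bar>X k x\<bar> powr q)"
  proof -
    have "(\<tau> x)\<^sup>2 \<le> \<delta> powr (2 - q) * c powr q * \<bar>X k x\<bar> powr q" for x
      using square_le_powr_mult_powr[of "\<bar>c * X k x\<bar>" \<delta> q] c q
      by (auto simp: \<tau>_def truncated_def abs_mult powr_mult mult.assoc power_mult_distrib)
    then show ?thesis
      using int_\<tau>2 integrable_powr_X[OF q(1,3), of k]
      by (intro integral_mono) auto
  qed
  also have "\<dots> = \<delta> powr (2 - q) * c powr q * expectation (\<lambda>x. \<bar>X 0 x\<bar> powr q)"
    using integral_comp_eq[of "\<lambda>v. \<bar>v\<bar> powr q" k] by simp
  finally show ?thesis .
qed

lemma indep_centered_truncation: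
  "indep_vars (\<lambda>_. borel) (\<lambda>k. centered_truncation \<delta> (a k) k) UNIV"
proof -
  define b where "b k = expectation (\<lambda>y. truncated \<delta> (a k * X k y))" for k
  have "indep_vars (\<lambda>_. borel) (\<lambda>k x. truncated \<delta> (a k * X k x) - b k) UNIV"
    by (rule indep_vars_compose2[OF indep_X, where Y="\<lambda>k v. truncated \<delta> (a k * v) - b k"]) measurable
  then show ?thesis unfolding b_def centered_truncation_def[abs_def] .
qed

lemma sum_expectation_centered_truncation_square_le:
  fixes a :: "nat \<Rightarrow> real" and I :: "nat set"
  assumes I: "finite I" and a: "\<And>k. k \<in> I \<Longrightarrow> 0 \<le> a k" "(\<Sum>k\<in>I. a k) \<le> 1"
    and \<delta>: "0 \<le> \<delta>" and q: "1 \<le> q" "q \<le> 2" "q \<le> p"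
  shows "(\<Sum>k\<in>I. expectation (\<lambda>x. (centered_truncation \<delta> (a k) k x)\<^sup>2))
    \<le> \<delta> powr (2 - q) * expectation (\<lambda>x. \<bar>X 0 x\<bar> powr q) * (\<Sum>k\<in>I. a k powr p) powr ((q - 1) / p)"
proof -
  have "(\<Sum>k\<in>I. expectation (\<lambda>x. (centered_truncation \<delta> (a k) k x)\<^sup>2))
      \<le> (\<Sum>k\<in>I. \<delta> powr (2 - q) * a k powr q * expectation (\<lambda>x. \<bar>X 0 x\<bar> powr q))"
    using a \<delta> q by (intro sum_mono expectation_centered_truncation_square_le) auto
  also have "\<dots> = \<delta> powr (2 - q) * expectation (\<lambda>x. \<bar>X 0 x\<bar> powr q) * (\<Sum>k\<in>I. a k powr q)"
    by (simp add: sum_distrib_right mult_ac)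
  also have "\<dots> \<le> \<delta> powr (2 - q) * expectation (\<lambda>x. \<bar>X 0 x\<bar> powr q) * (\<Sum>k\<in>I. a k powr p) powr ((q - 1) / p)"
    using I a q one_less_p
    by (intro mult_left_mono sum_powr_le_sum_powr_powr mult_nonneg_nonneg integral_nonneg_AE) auto
  finally show ?thesis .
qed

text \<open>The truncation level is tuned to the threshold so that the Chernoff bound decays like the
  block sum of \<open>a\<^sub>k\<^sup>p\<close>, which is summable over blocks.\<close>
lemma prob_sum_centered_truncation_ge:
  fixes a :: "nat \<Rightarrow> real" and I :: "nat set"
  assumes I: "finite I" and a: "\<And>k. k \<in> I \<Longrightarrow> 0 \<le> a k" "(\<Sum>k\<in>I. a k) \<le> 1"
    and m: "0 < (\<Sum>k\<in>I. a k powr p)" and \<epsilon>: "0 < \<epsilon>" and \<sigma>: "\<bar>\<sigma>\<bar> = 1"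
  defines "q \<equiv> min p 2"
  defines "R \<equiv> p / (q - 1)"
  defines "\<delta> \<equiv> \<epsilon> / (4 * R)"
  shows "prob {x \<in> space M. \<epsilon> \<le> (\<Sum>k\<in>I. \<sigma> * centered_truncation \<delta> (a k) k x)}
    \<le> exp (16 * (R / \<epsilon>)\<^sup>2 * (\<delta> powr (2 - q) * expectation (\<lambda>x. \<bar>X 0 x\<bar> powr q))) * (\<Sum>k\<in>I. a k powr p)"
proof -
  let ?U = "\<lambda>k x. \<sigma> * centered_truncation \<delta> (a k) k x"
  define t where "t = (\<Sum>k\<in>I. a k powr p) powr ((q - 1) / p)"
  have q: "1 < q" "q \<le> 2" "q \<le> p" using one_less_p by (auto simp: q_def)
  have R: "0 < R" using q one_less_p by (simp add: R_def)
  have \<delta>: "0 < \<delta>" using \<epsilon> R by (simp add: \<delta>_def)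
  have "a k powr p \<le> a k" if "k \<in> I" for k
    using a(1)[OF that] member_le_sum[of k I a, OF that] a I one_less_p
    by (cases "a k = 0") (auto intro: powr_le_one_le)
  then have "(\<Sum>k\<in>I. a k powr p) \<le> 1" using a(2) by (meson order.trans sum_mono)
  then have t: "0 < t" "t \<le> 1" using m q one_less_p by (auto simp: t_def powr_le1)
  have t_powr_R: "t powr R = (\<Sum>k\<in>I. a k powr p)" using q one_less_p m by (simp add: t_def R_def powr_powr)
  have "indep_vars (\<lambda>_. borel) ?U UNIV"
    by (rule indep_vars_compose2[OF indep_centered_truncation, where Y="\<lambda>_ v. \<sigma> * v"]) simp
  then have "indep_vars (\<lambda>_. borel) ?U I" by (rule indep_vars_subset) simp
  moreover have "\<bar>?U k x\<bar> \<le> \<epsilon> / (2 * R)" for k x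
    using abs_centered_truncation_le[of \<delta> "a k" k x] \<delta> \<sigma> R by (simp add: abs_mult \<delta>_def)
  moreover have "expectation (?U k) = 0" for k
    using expectation_centered_truncation[of \<delta> "a k" k] by simp
  moreover have "(\<Sum>k\<in>I. expectation (\<lambda>x. (?U k x)\<^sup>2))
      \<le> \<delta> powr (2 - q) * expectation (\<lambda>x. \<bar>X 0 x\<bar> powr q) * t"
    using sum_expectation_centered_truncation_square_le[OF I a, of \<delta> q] \<delta> q power2_abs[of \<sigma>] \<sigma>
    by (simp add: power_mult_distrib t_def)
  ultimately show ?thesis
    using prob_sum_ge_le_powr[OF I, of ?U \<epsilon> R _ t] t R \<epsilon> unfolding t_powr_R by auto
qed

lemma prob_abs_sum_centered_truncation_ge:
  fixes a :: "nat \<Rightarrow> real" and I :: "nat set"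
  assumes I: "finite I" and a: "\<And>k. k \<in> I \<Longrightarrow> 0 \<le> a k" "(\<Sum>k\<in>I. a k) \<le> 1" and \<epsilon>: "0 < \<epsilon>"
  defines "q \<equiv> min p 2"
  defines "R \<equiv> p / (q - 1)"
  defines "\<delta> \<equiv> \<epsilon> / (4 * R)"
  shows "prob {x \<in> space M. \<epsilon> \<le> \<bar>\<Sum>k\<in>I. centered_truncation \<delta> (a k) k x\<bar>}
    \<le> 2 * exp (16 * (R / \<epsilon>)\<^sup>2 * (\<delta> powr (2 - q) * expectation (\<lambda>x. \<bar>X 0 x\<bar> powr q)))
        * (\<Sum>k\<in>I. a k powr p)"
proof (cases "(\<Sum>k\<in>I. a k powr p) = 0")
  case True
  then have "a k = 0" if "k \<in> I" for k
    using that I a(1) by (simp add: sum_nonneg_eq_0_iff)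
  then show ?thesis using \<epsilon> by (simp add: centered_truncation_zero_weight)
next
  case False
  then have m: "0 < (\<Sum>k\<in>I. a k powr p)" by (simp add: order_le_neq_trans sum_nonneg)
  let ?E = "\<lambda>\<sigma>. {x \<in> space M. \<epsilon> \<le> (\<Sum>k\<in>I. \<sigma> * centered_truncation \<delta> (a k) k x)}"
  have "{x \<in> space M. \<epsilon> \<le> \<bar>\<Sum>k\<in>I. centered_truncation \<delta> (a k) k x\<bar>} \<subseteq> ?E 1 \<union> ?E (-1)"
    by (auto simp: abs_if sum_negf)
  then have "prob {x \<in> space M. \<epsilon> \<le> \<bar>\<Sum>k\<in>I. centered_truncation \<delta> (a k) k x\<bar>} \<le> prob (?E 1) + prob (?E (-1))"
    by (intro order.trans[OF finite_measure_mono measure_Un_le]) auto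
  then show ?thesis
    using prob_sum_centered_truncation_ge[OF I a m \<epsilon>, of 1] prob_sum_centered_truncation_ge[OF I a m \<epsilon>, of "-1"]
    unfolding q_def R_def \<delta>_def by simp
qed

lemma AE_eventually_abs_block_sum_centered_truncation_less:
  fixes a :: "nat \<Rightarrow> real" and s :: "nat \<Rightarrow> nat"
  assumes a: "\<And>k. 0 \<le> a k" "summable (\<lambda>k. a k powr p)" and s: "strict_mono s"
    and mass: "\<And>j. (\<Sum>k\<in>{s j..<s (Suc j)}. a k) \<le> 1" and \<epsilon>: "0 < \<epsilon>"
  defines "\<delta> \<equiv> \<epsilon> / (4 * (p / (min p 2 - 1)))"
  shows "AE x in M. eventually
    (\<lambda>j. \<bar>\<Sum>k\<in>{s j..<s (Suc j)}. centered_truncation \<delta> (a k) k x\<bar> < \<epsilon>) sequentially"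
proof -
  define E where "E j = {x \<in> space M. \<epsilon> \<le> \<bar>\<Sum>k\<in>{s j..<s (Suc j)}. centered_truncation \<delta> (a k) k x\<bar>}" for j
  define G where "G = 2 * exp (16 * (p / (min p 2 - 1) / \<epsilon>)\<^sup>2
    * (\<delta> powr (2 - min p 2) * expectation (\<lambda>x. \<bar>X 0 x\<bar> powr min p 2)))"
  have [measurable]: "E j \<in> sets M" for j unfolding E_def by measurable
  have "summable (\<lambda>j. \<Sum>k\<in>{s j..<s (Suc j)}. a k powr p)"
    using a by (intro summable_block_sums[OF s]) auto
  then have majorant: "summable (\<lambda>j. G * (\<Sum>k\<in>{s j..<s (Suc j)}. a k powr p))" by (rule summable_mult)
  have "measure M (E j) \<le> G * (\<Sum>k\<in>{s j..<s (Suc j)}. a k powr p)" for j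
    using prob_abs_sum_centered_truncation_ge[of "{s j..<s (Suc j)}" a \<epsilon>] a(1) mass[of j] \<epsilon>
    unfolding E_def G_def \<delta>_def by simp
  then have "summable (\<lambda>j. measure M (E j))" by (intro summable_comparison_test'[OF majorant]) simp
  then have "AE x in M. eventually (\<lambda>j. x \<in> space M - E j) sequentially"
    by (intro borel_cantelli_AE1) (auto simp: emeasure_eq_measure)
  then show ?thesis
  proof eventually_elim
    case (elim x)
    from elim show ?case by eventually_elim (auto simp: E_def)
  qed
qed

lemma eventually_abs_block_sum_expectation_truncated_le:
  fixes a :: "nat \<Rightarrow> real" and s :: "nat \<Rightarrow> nat"
  assumes a: "\<And>k. 0 \<le> a k" "summable (\<lambda>k. a k powr p)" and s: "strict_mono s"
    and \<delta>: "0 < \<delta>" and \<epsilon>: "0 < \<epsilon>"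
  shows "eventually
    (\<lambda>j. \<bar>\<Sum>k\<in>{s j..<s (Suc j)}. expectation (\<lambda>x. truncated \<delta> (a k * X k x))\<bar> \<le> \<epsilon>) sequentially"
proof -
  define C where "C = expectation (\<lambda>x. \<bar>X 0 x\<bar> powr p) / \<delta> powr (p - 1)"
  define m where "m j = (\<Sum>k\<in>{s j..<s (Suc j)}. a k powr p)" for j
  have "summable m" unfolding m_def using a by (intro summable_block_sums[OF s]) auto
  then have "(\<lambda>j. C * m j) \<longlonglongrightarrow> C * 0" by (intro tendsto_mult tendsto_const summable_LIMSEQ_zero)
  then have small: "eventually (\<lambda>j. C * m j < \<epsilon>) sequentially" using \<epsilon> by (intro order_tendstoD) auto
  have bias: "\<bar>\<Sum>k\<in>{s j..<s (Suc j)}. expectation (\<lambda>x. truncated \<delta> (a k * X k x))\<bar> \<le> C * m j" for j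
  proof -
    have "\<bar>\<Sum>k\<in>{s j..<s (Suc j)}. expectation (\<lambda>x. truncated \<delta> (a k * X k x))\<bar>
        \<le> (\<Sum>k\<in>{s j..<s (Suc j)}. a k powr p * expectation (\<lambda>x. \<bar>X 0 x\<bar> powr p) / \<delta> powr (p - 1))"
      using a(1) \<delta> by (intro order.trans[OF sum_abs sum_mono] abs_expectation_truncated_le)
    also have "\<dots> = C * m j"
      unfolding C_def m_def sum_divide_distrib[symmetric] sum_distrib_right[symmetric] by (simp add: mult_ac)
    finally show ?thesis .
  qed
  from small show ?thesis by eventually_elim (rule order.trans[OF bias], linarith)
qed

lemma AE_eventually_block_sums_small:
  fixes a :: "nat \<Rightarrow> real" and s :: "nat \<Rightarrow> nat"
  assumes a: "\<And>k. 0 \<le> a k" "summable (\<lambda>k. a k powr p)" and s: "strict_mono s"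
    and mass: "\<And>j. (\<Sum>k\<in>{s j..<s (Suc j)}. a k) \<le> 1" and \<epsilon>: "0 < \<epsilon>"
  shows "AE x in M. eventually (\<lambda>j. \<bar>\<Sum>k\<in>{s j..<s (Suc j)}. a k * X k x\<bar> \<le> \<epsilon>) sequentially"
proof -
  define \<delta> where "\<delta> = \<epsilon> / 2 / (4 * (p / (min p 2 - 1)))"
  have \<delta>: "0 < \<delta>" using \<epsilon> one_less_p by (simp add: \<delta>_def)
  have bias: "eventually (\<lambda>j. \<bar>\<Sum>k\<in>{s j..<s (Suc j)}. expectation (\<lambda>x. truncated \<delta> (a k * X k x))\<bar>
      \<le> \<epsilon> / 2) sequentially"
    using \<epsilon> by (intro eventually_abs_block_sum_expectation_truncated_le[OF a s \<delta>]) simp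
  have "AE x in M. eventually (\<lambda>k. a k * \<bar>X k x\<bar> \<le> \<delta>) sequentially"
    using one_less_p by (intro AE_eventually_weighted_le[where p=p] integrable_powr_X0 a \<delta>) auto
  then have "AE x in M. eventually (\<lambda>j. \<forall>k\<in>{s j..<s (Suc j)}. a k * \<bar>X k x\<bar> \<le> \<delta>) sequentially"
    by eventually_elim (rule eventually_all_in_blocks[OF s])
  moreover have "AE x in M. eventually
      (\<lambda>j. \<bar>\<Sum>k\<in>{s j..<s (Suc j)}. centered_truncation \<delta> (a k) k x\<bar> < \<epsilon> / 2) sequentially"
    unfolding \<delta>_def using a s mass \<epsilon> by (intro AE_eventually_abs_block_sum_centered_truncation_less) auto
  ultimately show ?thesis
  proof eventually_elim
    case (elim x)
    from elim bias
    show ?case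
    proof eventually_elim
      case (elim j)
      have "(\<Sum>k\<in>{s j..<s (Suc j)}. a k * X k x) = (\<Sum>k\<in>{s j..<s (Suc j)}. truncated \<delta> (a k * X k x))"
        using elim(1) a(1) by (intro sum.cong) (auto simp: truncated_def abs_mult)
      also have "\<dots> = (\<Sum>k\<in>{s j..<s (Suc j)}. centered_truncation \<delta> (a k) k x)
          + (\<Sum>k\<in>{s j..<s (Suc j)}. expectation (\<lambda>x. truncated \<delta> (a k * X k x)))"
        by (simp add: centered_truncation_def sum.distrib[symmetric])
      finally show ?case using elim(2,3) by linarith
    qed
  qed
qed

lemma AE_eventually_block_sums_small_tail:
  fixes a :: "nat \<Rightarrow> real" and s :: "nat \<Rightarrow> nat"
  assumes a: "\<And>k. s 0 \<le> k \<Longrightarrow> 0 \<le> a k" "summable (\<lambda>k. a k powr p)" and s: "strict_mono s"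
    and mass: "\<And>j. (\<Sum>k\<in>{s j..<s (Suc j)}. a k) \<le> 1" and \<epsilon>: "0 < \<epsilon>"
  shows "AE x in M. eventually (\<lambda>j. \<bar>\<Sum>k\<in>{s j..<s (Suc j)}. a k * X k x\<bar> \<le> \<epsilon>) sequentially"
proof -
  define a' where "a' k = (if s 0 \<le> k then a k else 0)" for k
  have on_blocks: "(\<Sum>k\<in>{s j..<s (Suc j)}. a' k * f k) = (\<Sum>k\<in>{s j..<s (Suc j)}. a k * f k)" for f j
    using strict_mono_less_eq[OF s, of 0 j] by (intro sum.cong) (auto simp: a'_def)
  have "0 \<le> a' k" for k using a(1) by (simp add: a'_def)
  moreover have "summable (\<lambda>k. a' k powr p)"
    using a(2) by (rule summable_comparison_test'[where N=0]) (simp add: a'_def)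
  moreover have "(\<Sum>k\<in>{s j..<s (Suc j)}. a' k) \<le> 1" for j
    using on_blocks[of "\<lambda>_. 1" j] mass[of j] by simp
  ultimately show ?thesis
    using AE_eventually_block_sums_small[of a' s \<epsilon>] s \<epsilon> unfolding on_blocks by blast
qed

end

section \<open>Almost sure convergence of the iteration\<close>

lemma (in iid_sequence) centered_iid_comp:
  fixes g :: "real \<Rightarrow> real"
  assumes [measurable]: "g \<in> borel_measurable borel" and p: "1 < p"
    and moment: "integrable M (\<lambda>x. \<bar>g (X 0 x)\<bar> powr p)"
  shows "centered_iid M (\<lambda>k x. g (X k x) - expectation (\<lambda>x. g (X 0 x))) p"
proof -
  define c where "c = expectation (\<lambda>x. g (X 0 x))"
  have "integrable M (\<lambda>x. \<bar>g (X 0 x)\<bar> powr 1)"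
    using p by (intro integrable_abs_powr_mono[OF _ moment]) auto
  then have "integrable M (\<lambda>x. g (X 0 x))" by (subst integrable_abs_iff[symmetric]) auto
  then have "expectation (\<lambda>x. g (X 0 x) - c) = 0" by (simp add: c_def prob_space)
  moreover have "integrable M (\<lambda>x. \<bar>g (X 0 x) - c\<bar> powr p)"
    using integrable_abs_add_powr[OF _ moment, of "- c"] p by simp
  moreover have "iid_sequence M (\<lambda>k x. g (X k x) - c)" by (rule iid_sequence_comp) simp
  ultimately show ?thesis
    unfolding c_def[symmetric] using p by (intro centered_iid.intro centered_iid_axioms.intro)
qed

lemma LIMSEQ_of_eventually_dist_le:
  fixes f :: "nat \<Rightarrow> 'b::metric_space"
  assumes "\<And>m. eventually (\<lambda>n. dist (f n) l \<le> e m) sequentially" and "e \<longlonglongrightarrow> 0"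
  shows "f \<longlonglongrightarrow> l"
proof (rule tendstoI)
  fix r :: real assume "0 < r"
  then obtain m where "e m < r"
    using order_tendstoD(2)[OF assms(2)] eventually_sequentially by (metis order_refl)
  then show "eventually (\<lambda>n. dist (f n) l < r) sequentially"
    using assms(1)[of m] by (auto elim: eventually_mono)
qed

lemma sum_abs_le_of_centered:
  fixes a y :: "nat \<Rightarrow> real"
  assumes centered: "\<bar>\<Sum>k\<in>B. a k * (\<bar>y k\<bar> - c)\<bar> \<le> \<eta> * \<eta>" and mass: "(\<Sum>k\<in>B. a k) \<le> 2 * \<eta>"
    and "0 \<le> c" "0 \<le> \<eta>" "\<eta> \<le> 1"
  shows "(\<Sum>k\<in>B. a k * \<bar>y k\<bar>) \<le> (1 + 2 * c) * \<eta>"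
proof -
  have "(\<Sum>k\<in>B. a k * \<bar>y k\<bar>) = (\<Sum>k\<in>B. a k * (\<bar>y k\<bar> - c)) + c * (\<Sum>k\<in>B. a k)"
    by (simp add: algebra_simps sum.distrib sum_distrib_left sum_subtractf)
  also have "\<dots> \<le> \<eta> * \<eta> + c * (2 * \<eta>)"
    using centered mass assms(3) by (intro add_mono mult_left_mono) auto
  also have "\<dots> \<le> (1 + 2 * c) * \<eta>"
    using assms(4,5) mult_right_mono[of \<eta> 1 \<eta>] by (simp add: algebra_simps)
  finally show ?thesis .
qed

lemma eventually_le_of_summable_powr:
  fixes f :: "nat \<Rightarrow> real"
  assumes "summable (\<lambda>n. f n powr p)" "0 < p" "0 < \<eta>"
  shows "eventually (\<lambda>n. f n \<le> \<eta>) sequentially"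
proof -
  have "(\<lambda>n. f n powr p) \<longlonglongrightarrow> 0" by (rule summable_LIMSEQ_zero[OF assms(1)])
  then have "eventually (\<lambda>n. f n powr p < \<eta> powr p) sequentially"
    using assms by (intro order_tendstoD) auto
  then show ?thesis
  proof eventually_elim
    case (elim n)
    show ?case
    proof (rule ccontr)
      assume "\<not> f n \<le> \<eta>"
      then have "\<eta> powr p \<le> f n powr p" using assms by (intro powr_mono2) auto
      with elim show False by simp
    qed
  qed
qed

context iid_sequence
begin

text \<open>The block sums of the centered noise \<open>Y\<^sub>k = X\<^sub>k - \<mu>\<close> drive the contraction argument; those of
  \<open>W\<^sub>k = |Y\<^sub>k| - c\<close> bound the weighted absolute noise over a block by \<open>(1 + 2c)\<eta>\<close>.\<close>
lemma AE_eventually_sa_iter_close: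
  fixes a :: "nat \<Rightarrow> real"
  assumes p: "1 < p" and moment: "integrable M (\<lambda>x. \<bar>X 0 x\<bar> powr p)"
    and a_pos: "\<And>n. 1 \<le> n \<Longrightarrow> 0 < a n" and diverges: "\<not> summable (\<lambda>n. a (Suc n))"
    and summable_powr: "summable (\<lambda>n. a (Suc n) powr p)"
    and \<eta>: "0 < \<eta>" "\<eta> \<le> 1/8"
  defines "\<mu> \<equiv> expectation (X 0)"
  defines "c \<equiv> expectation (\<lambda>x. \<bar>X 0 x - \<mu>\<bar>)"
  shows "AE x in M. eventually (\<lambda>n. \<bar>sa_iter a X n x - \<mu>\<bar> \<le> (20 + 28 * c) * \<eta>) sequentially"
proof -
  define Y where "Y k x = X k x - \<mu>" for k x
  define W where "W k x = \<bar>Y k x\<bar> - c" for k x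
  interpret Y: centered_iid M Y p
    unfolding Y_def \<mu>_def using centered_iid_comp[of "\<lambda>v. v", OF _ p moment] by simp
  interpret W: centered_iid M W p
    unfolding W_def c_def Y_def[symmetric]
    using Y.centered_iid_comp[of "\<lambda>v. \<bar>v\<bar>", OF _ p] Y.integrable_powr_X0 by simp
  have c: "0 \<le> c" unfolding c_def by (intro integral_nonneg_AE) auto
  have "eventually (\<lambda>n. a (Suc n) \<le> \<eta>) sequentially"
    using summable_powr p \<eta> by (intro eventually_le_of_summable_powr[where p=p]) auto
  then have "eventually (\<lambda>k. a k \<le> \<eta> \<and> 1 \<le> k) sequentially"
    by (simp add: eventually_sequentially_Suc[of "\<lambda>k. a k \<le> \<eta>", symmetric] eventually_conj eventually_ge_at_top)
  then obtain N where N: "\<And>k. N \<le> k \<Longrightarrow> a k \<le> \<eta> \<and> 1 \<le> k" unfolding eventually_sequentially by blast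
  have a_N: "0 \<le> a k" "a k \<le> \<eta>" if "N \<le> k" for k
    using N[OF that] a_pos by (auto intro: less_imp_le)
  have "\<not> summable a" using diverges summable_Suc_iff by blast
  then obtain s where s: "strict_mono s" "s 0 = N"
    and mass: "\<And>j. \<eta> \<le> (\<Sum>k\<in>{s j..<s (Suc j)}. a k)" "\<And>j. (\<Sum>k\<in>{s j..<s (Suc j)}. a k) \<le> 2 * \<eta>"
    using blocks_of_bounded_mass[of N a \<eta>] a_N \<eta>(1) by blast
  have "summable (\<lambda>k. a k powr p)" using summable_powr summable_Suc_iff by blast
  moreover have "(\<Sum>k\<in>{s j..<s (Suc j)}. a k) \<le> 1" for j using mass(2)[of j] \<eta> by simp
  moreover have "0 < \<eta> * \<eta>" using \<eta> by simp
  ultimately have block_sums_small: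
    "AE x in M. eventually (\<lambda>j. \<bar>\<Sum>k\<in>{s j..<s (Suc j)}. a k * Y k x\<bar> \<le> \<eta> * \<eta>) sequentially"
    "AE x in M. eventually (\<lambda>j. \<bar>\<Sum>k\<in>{s j..<s (Suc j)}. a k * W k x\<bar> \<le> \<eta> * \<eta>) sequentially"
    using a_N s by (auto intro!: Y.AE_eventually_block_sums_small_tail W.AE_eventually_block_sums_small_tail)
  from block_sums_small show ?thesis
  proof eventually_elim
    case (elim x)
    define e where "e n = sa_iter a X n x - \<mu>" for n
    have rec: "e (Suc k) = (1 - a k) * e k + a k * Y k x" if "s 0 \<le> k" for k
      using N[of k] that s(2) by (auto simp: e_def Y_def algebra_simps)
    have abs_sum_small:
      "eventually (\<lambda>j. (\<Sum>k\<in>{s j..<s (Suc j)}. a k * \<bar>Y k x\<bar>) \<le> (1 + 2 * c) * \<eta>) sequentially"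
      using elim(2) by eventually_elim (use mass(2) c \<eta> in \<open>auto simp: W_def intro: sum_abs_le_of_centered\<close>)
    have "eventually (\<lambda>n. \<bar>e n\<bar> \<le> (6 + 14 * (1 + 2 * c)) * \<eta>) sequentially"
      by (rule relaxation_eventually_small[OF s(1) rec _ mass \<eta> _ elim(1) abs_sum_small])
         (use a_N s(2) c in auto)
    then show ?case by (simp add: e_def algebra_simps)
  qed
qed

theorem AE_sa_iter_tendsto:
  fixes a :: "nat \<Rightarrow> real"
  assumes "1 < p" and "integrable M (\<lambda>x. \<bar>X 0 x\<bar> powr p)"
    and "\<And>n. 1 \<le> n \<Longrightarrow> 0 < a n" and "\<not> summable (\<lambda>n. a (Suc n))"
    and "summable (\<lambda>n. a (Suc n) powr p)"
  shows "AE x in M. (\<lambda>n. sa_iter a X n x) \<longlonglongrightarrow> expectation (X 0)"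
proof -
  define K where "K = 20 + 28 * expectation (\<lambda>x. \<bar>X 0 x - expectation (X 0)\<bar>)"
  define \<eta> where "\<eta> m = inverse (real (Suc m)) / 8" for m
  have "AE x in M. eventually (\<lambda>n. \<bar>sa_iter a X n x - expectation (X 0)\<bar> \<le> K * \<eta> m) sequentially" for m
    unfolding K_def using assms
    by (intro AE_eventually_sa_iter_close) (auto simp: \<eta>_def field_simps)
  then have "AE x in M. \<forall>m. eventually (\<lambda>n. dist (sa_iter a X n x) (expectation (X 0)) \<le> K * \<eta> m) sequentially"
    by (simp add: AE_all_countable dist_real_def)
  moreover have "(\<lambda>m. K * \<eta> m) \<longlonglongrightarrow> 0"
    unfolding \<eta>_def by (intro tendsto_mult_right_zero tendsto_divide_zero LIMSEQ_inverse_real_of_nat)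
  ultimately show ?thesis by (auto elim!: eventually_mono intro: LIMSEQ_of_eventually_dist_le)
qed

end

lemma not_summable_polynomial_step:
  fixes \<alpha> K \<xi> :: real
  assumes \<alpha>: "0 < \<alpha>" and K: "0 < K" and \<xi>: "\<xi> \<le> 1"
  shows "\<not> summable (\<lambda>n. \<alpha> * (real (Suc n) + K) powr (- \<xi>))"
proof
  assume "summable (\<lambda>n. \<alpha> * (real (Suc n) + K) powr (- \<xi>))"
  then have majorant: "summable (\<lambda>n. (1 + K) / \<alpha> * (\<alpha> * (real (Suc n) + K) powr (- \<xi>)))"
    by (rule summable_mult)
  have "inverse (real (Suc n)) \<le> (1 + K) / \<alpha> * (\<alpha> * (real (Suc n) + K) powr (- \<xi>))" for n
  proof -
    have "inverse (real (Suc n)) \<le> (1 + K) * inverse (real (Suc n) + K)"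
      using K by (simp add: field_simps)
    also have "inverse (real (Suc n) + K) = (real (Suc n) + K) powr (- 1)"
      using K by (simp add: powr_minus)
    also have "\<dots> \<le> (real (Suc n) + K) powr (- \<xi>)" using \<xi> K by (intro powr_mono) auto
    finally show ?thesis using \<alpha> K by (simp add: mult_left_mono)
  qed
  then have "summable (\<lambda>n. inverse (real (Suc n)))"
    by (intro summable_comparison_test'[OF majorant]) simp
  then show False using not_summable_harmonic[where 'a=real] summable_Suc_iff by blast
qed

lemma summable_polynomial_step_powr:
  fixes \<alpha> K \<xi> p :: real
  assumes \<alpha>: "0 < \<alpha>" and K: "0 < K" and \<xi>: "1 / p < \<xi>" and p: "0 < p"
  shows "summable (\<lambda>n. (\<alpha> * (real (Suc n) + K) powr (- \<xi>)) powr p)"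
proof (rule summable_comparison_test')
  have "summable (\<lambda>n. real n powr (- (\<xi> * p)))"
    using \<xi> p by (subst summable_real_powr_iff) (simp add: field_simps)
  then show "summable (\<lambda>n. \<alpha> powr p * real (Suc n) powr (- (\<xi> * p)))"
    by (intro summable_mult) (simp only: summable_Suc_iff[of "\<lambda>n. real n powr (- (\<xi> * p))"])
  fix n
  have "(\<alpha> * (real (Suc n) + K) powr (- \<xi>)) powr p = \<alpha> powr p * (real (Suc n) + K) powr (- (\<xi> * p))"
    using \<alpha> by (simp add: powr_mult powr_powr)
  also have "\<dots> \<le> \<alpha> powr p * real (Suc n) powr (- (\<xi> * p))"
    using K \<xi> p by (intro mult_left_mono powr_mono2') (auto simp: field_simps)
  finally show "norm ((\<alpha> * (real (Suc n) + K) powr (- \<xi>)) powr p) \<le> \<alpha> powr p * real (Suc n) powr (- (\<xi> * p))"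
    by simp
qed

theorem corollary7:
  fixes M :: "'a measure" and Z :: "nat \<Rightarrow> 'a \<Rightarrow> real" and \<mu> p :: real
  assumes "prob_space M"
    and "\<And>n. Z n \<in> borel_measurable M"
    and "prob_space.indep_vars M (\<lambda>_. borel) Z UNIV"
    and "\<And>n. distr M borel (Z n) = distr M borel (Z 0)"
    and "p > 1"
    and "integrable M (\<lambda>x. \<bar>Z 0 x\<bar> powr p)"
    and "integrable M (Z 0)"
    and "(\<integral>x. Z 0 x \<partial>M) = \<mu>"
  shows "(\<forall>a :: nat \<Rightarrow> real.
            (\<forall>n\<ge>1. a n > 0) \<and> (\<forall>n\<ge>1. a (Suc n) \<le> a n) \<and>
            \<not> summable (\<lambda>n. a (Suc n)) \<and> summable (\<lambda>n. a (Suc n) powr p)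
            \<longrightarrow> (AE x in M. (\<lambda>n. sa_iter a Z n x) \<longlonglongrightarrow> \<mu>))
       \<and> (\<forall>\<alpha> K \<xi> :: real. \<alpha> > 0 \<and> K > 0 \<and> 1 / p < \<xi> \<and> \<xi> \<le> 1
            \<longrightarrow> (AE x in M. (\<lambda>n. sa_iter (\<lambda>n. \<alpha> * (real n + K) powr (- \<xi>)) Z n x)
                               \<longlonglongrightarrow> \<mu>))"
proof -
  interpret iid_sequence M Z
    using assms(1-4) by (intro iid_sequence.intro iid_sequence_axioms.intro)
  have main: "AE x in M. (\<lambda>n. sa_iter a Z n x) \<longlonglongrightarrow> \<mu>"
    if "\<forall>n\<ge>1. a n > 0" "\<not> summable (\<lambda>n. a (Suc n))" "summable (\<lambda>n. a (Suc n) powr p)" for a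
    using AE_sa_iter_tendsto[OF assms(5,6)] that assms(8) by auto
  show ?thesis
  proof (intro conjI allI impI)
    fix a :: "nat \<Rightarrow> real"
    assume "(\<forall>n\<ge>1. a n > 0) \<and> (\<forall>n\<ge>1. a (Suc n) \<le> a n) \<and>
      \<not> summable (\<lambda>n. a (Suc n)) \<and> summable (\<lambda>n. a (Suc n) powr p)"
    then show "AE x in M. (\<lambda>n. sa_iter a Z n x) \<longlonglongrightarrow> \<mu>" using main by blast
  next
    fix \<alpha> K \<xi> :: real
    assume "\<alpha> > 0 \<and> K > 0 \<and> 1 / p < \<xi> \<and> \<xi> \<le> 1"
    then show "AE x in M. (\<lambda>n. sa_iter (\<lambda>n. \<alpha> * (real n + K) powr (- \<xi>)) Z n x) \<longlonglongrightarrow> \<mu>"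
      using assms(5) by (intro main not_summable_polynomial_step summable_polynomial_step_powr) auto
  qed
qed

end
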